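(* Let $A,A'$ be bounded distributive lattices and $f:A\to A'$ a lattice morphism. Let $\mathcal{L}$ (resp. $\mathcal{L}'$) be the abstract logic with expressions $A$ (resp. $A'$), theories the proper filters of $A$ (resp. $A'$), and connectives $\vee,\wedge,\bot,\top$. Then $f:\mathcal{L}\to\mathcal{L}'$ is a stable logic map.
   Context: An abstract logic is a triple $\mathcal{L}=(Expr_{\mathcal{L}},Th_{\mathcal{L}},\mathcal{C}_{\mathcal{L}})$ where $Expr_{\mathcal{L}}$ is a set, $Th_{\mathcal{L}}$ a non-empty set of subsets of $Expr_{\mathcal{L}}$ (theories) closed under intersections of non-empty subfamilies, and $\mathcal{C}_{\mathcal{L}}$ a set of operations on $Expr_{\mathcal{L}}$. A theory $T$ is prime if $T=\bigcap\mathcal{T}$ for a non-empty finite $\mathcal{T}\subseteq Th_{\mathcal{L}}$ implies $T\in\mathcal{T}$; $PTh_{\mathcal{L}}$ denotes the set of prime theories (for the logic of proper filters of a bounded distributive lattice these are exactly the prime filters). A stable logic map $h:\mathcal{L}\to\mathcal{L}'$ is a function $Expr_{\mathcal{L}}\to Expr_{\mathcal{L}'}$ with $h^{-1}(T')\in Th_{\mathcal{L}}$ for all $T'\in Th_{\mathcal{L}'}$ and $h^{-1}(P')\in PTh_{\mathcal{L}}$ for all $P'\in PTh_{\mathcal{L}'}$. *)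

theory Defs
  imports Main
begin

text \<open>Abstract logics: a set of theories (subsets of the expressions).
  Here the expressions of a logic are all elements of a type.\<close>

definition abstract_logic_theories :: "'a set set \<Rightarrow> bool" where
  "abstract_logic_theories Th \<longleftrightarrow> Th \<noteq> {} \<and>
     (\<forall>\<T>. \<T> \<noteq> {} \<and> \<T> \<subseteq> Th \<longrightarrow> \<Inter>\<T> \<in> Th)"

definition prime_theories :: "'a set set \<Rightarrow> 'a set set" where
  "prime_theories Th = {T \<in> Th. \<forall>\<T>. finite \<T> \<and> \<T> \<noteq> {} \<and> \<T> \<subseteq> Th \<and> T = \<Inter>\<T> \<longrightarrow> T \<in> \<T>}"

definition stable_logic_map :: "'a set set \<Rightarrow> 'b set set \<Rightarrow> ('a \<Rightarrow> 'b) \<Rightarrow> bool" where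
  "stable_logic_map Th Th' h \<longleftrightarrow>
     (\<forall>T'\<in>Th'. h -` T' \<in> Th) \<and>
     (\<forall>P'\<in>prime_theories Th'. h -` P' \<in> prime_theories Th)"

definition proper_filter :: "'a::bounded_lattice set \<Rightarrow> bool" where
  "proper_filter F \<longleftrightarrow> top \<in> F \<and> bot \<notin> F \<and>
     (\<forall>x y. x \<in> F \<and> x \<le> y \<longrightarrow> y \<in> F) \<and>
     (\<forall>x y. x \<in> F \<and> y \<in> F \<longrightarrow> inf x y \<in> F)"

definition proper_filters :: "'a::bounded_lattice set set" where
  "proper_filters = {F. proper_filter F}"

definition lattice_morphism :: "('a::bounded_lattice \<Rightarrow> 'b::bounded_lattice) \<Rightarrow> bool" where
  "lattice_morphism f \<longleftrightarrow>
     (\<forall>x y. f (sup x y) = sup (f x) (f y)) \<and>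
     (\<forall>x y. f (inf x y) = inf (f x) (f y)) \<and>
     f bot = bot \<and> f top = top"

end

theory Submission
  imports Defs
begin

text \<open>The prime theories of the logic of proper filters are exactly the prime filters.
  A prime filter \<open>P = \<Inter>\<T>\<close> must contain some member of \<open>\<T>\<close>: otherwise picking
  \<open>t\<^sub>T \<in> T - P\<close> for each \<open>T\<close> gives \<open>\<Squnion>t\<^sub>T \<in> \<Inter>\<T> = P\<close>. Conversely, if
  \<open>x \<squnion> y \<in> P\<close> with \<open>x, y \<notin> P\<close>, then by distributivity \<open>P\<close> is the intersection
  of the filters generated by \<open>P \<union> {x}\<close> and \<open>P \<union> {y}\<close>, both different from \<open>P\<close>
  (if one of them is improper, the other one equals \<open>P\<close>). Since lattice morphisms
  pull back proper filters to proper filters and prime filters to prime filters,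
  the theorem follows.\<close>

definition prime_filter :: "'a::bounded_lattice set \<Rightarrow> bool" where
  "prime_filter F \<longleftrightarrow> proper_filter F \<and> (\<forall>x y. sup x y \<in> F \<longrightarrow> x \<in> F \<or> y \<in> F)"

lemma lattice_morphism_mono:
  assumes "lattice_morphism f" and "x \<le> y"
  shows "f x \<le> f y"
  by (metis assms inf.orderE inf.orderI inf_le2 lattice_morphism_def)

lemma proper_filter_vimage:
  assumes f: "lattice_morphism f" and F: "proper_filter F"
  shows "proper_filter (f -` F)"
  using F lattice_morphism_mono[OF f] f
  unfolding proper_filter_def lattice_morphism_def by (auto, blast)

lemma prime_filter_vimage:
  assumes f: "lattice_morphism f" and P: "prime_filter P"
  shows "prime_filter (f -` P)"
  using P proper_filter_vimage[OF f] f
  unfolding prime_filter_def lattice_morphism_def by auto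

lemma Inter_subset_prime_imp_member_subset:
  fixes P :: "'a::lattice set"
  assumes "finite \<T>" and "\<T> \<noteq> {}"
    and up: "\<And>T x y. T \<in> \<T> \<Longrightarrow> x \<in> T \<Longrightarrow> x \<le> y \<Longrightarrow> y \<in> T"
    and prime: "\<And>x y. sup x y \<in> P \<Longrightarrow> x \<in> P \<or> y \<in> P"
    and "\<Inter>\<T> \<subseteq> P"
  shows "\<exists>T\<in>\<T>. T \<subseteq> P"
  using assms(1,2) up assms(5)
proof (induction \<T> rule: finite_ne_induct)
  case (singleton T)
  then show ?case by simp
next
  case (insert T \<T>)
  show ?case
  proof (cases "T \<subseteq> P")
    case False
    then obtain t where t: "t \<in> T" "t \<notin> P" by auto
    have "\<Inter>\<T> \<subseteq> P"
    proof
      fix z assume z: "z \<in> \<Inter>\<T>"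
      have "sup t z \<in> T"
        using insert.prems(1) t(1) sup_ge1 by blast
      moreover have "sup t z \<in> \<Inter>\<T>"
        using insert.prems(1) z sup_ge2 by (metis InterD InterI insertCI)
      ultimately have "sup t z \<in> P" using insert.prems(2) by auto
      then show "z \<in> P" using prime t(2) by blast
    qed
    then show ?thesis using insert.IH insert.prems(1) by auto
  qed simp
qed

lemma prime_filter_in_prime_theories:
  fixes P :: "'a::bounded_lattice set"
  assumes P: "prime_filter P"
  shows "P \<in> prime_theories proper_filters"
  unfolding prime_theories_def
proof (intro CollectI conjI allI impI)
  show "P \<in> proper_filters"
    using P by (simp add: prime_filter_def proper_filters_def)
next
  fix \<T> assume "finite \<T> \<and> \<T> \<noteq> {} \<and> \<T> \<subseteq> proper_filters \<and> P = \<Inter>\<T>"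
  then have \<T>: "finite \<T>" "\<T> \<noteq> {}" "\<T> \<subseteq> proper_filters" and P_eq: "P = \<Inter>\<T>"
    by auto
  have "\<exists>T\<in>\<T>. T \<subseteq> P"
  proof (rule Inter_subset_prime_imp_member_subset[OF \<T>(1,2)])
    show "\<And>T x y. T \<in> \<T> \<Longrightarrow> x \<in> T \<Longrightarrow> x \<le> y \<Longrightarrow> y \<in> T"
      using \<T>(3) by (auto simp: proper_filters_def proper_filter_def)
  qed (use P P_eq in \<open>auto simp: prime_filter_def\<close>)
  then obtain T where "T \<in> \<T>" "T \<subseteq> P"
    by blast
  moreover have "P \<subseteq> T"
    using P_eq \<open>T \<in> \<T>\<close> by blast
  ultimately show "P \<in> \<T>"
    by (simp add: subset_antisym)
qed

definition filter_adjoin :: "'a::lattice set \<Rightarrow> 'a \<Rightarrow> 'a set" where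
  "filter_adjoin F a = {z. \<exists>p\<in>F. inf p a \<le> z}"

lemma filter_adjoin_mem: "p \<in> F \<Longrightarrow> a \<in> filter_adjoin F a"
  unfolding filter_adjoin_def by (auto intro: inf_le2)

lemma subset_filter_adjoin: "F \<subseteq> filter_adjoin F a"
  unfolding filter_adjoin_def by (auto intro: inf_le1)

lemma filter_adjoin_upclosed:
  "x \<in> filter_adjoin F a \<Longrightarrow> x \<le> y \<Longrightarrow> y \<in> filter_adjoin F a"
  unfolding filter_adjoin_def by (auto intro: order_trans)

lemma filter_adjoin_inf_closed:
  assumes F: "\<And>x y. x \<in> F \<Longrightarrow> y \<in> F \<Longrightarrow> inf x y \<in> F"
    and "u \<in> filter_adjoin F a" "v \<in> filter_adjoin F a"
  shows "inf u v \<in> filter_adjoin F a"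
proof -
  obtain p q where pq: "p \<in> F" "q \<in> F" "inf p a \<le> u" "inf q a \<le> v"
    using assms(2,3) unfolding filter_adjoin_def by auto
  have "inf (inf p q) a \<le> inf p a" "inf (inf p q) a \<le> inf q a"
    by (simp_all add: le_infI1 inf_mono)
  then have "inf (inf p q) a \<le> inf u v"
    using pq(3,4) by (meson le_infI order_trans)
  then show ?thesis
    using F pq(1,2) unfolding filter_adjoin_def by blast
qed

lemma proper_filter_filter_adjoin:
  assumes F: "proper_filter F" and "bot \<notin> filter_adjoin F a"
  shows "proper_filter (filter_adjoin F a)"
proof -
  have "top \<in> filter_adjoin F a"
    using F subset_filter_adjoin by (auto simp: proper_filter_def)
  moreover have "\<And>u v. u \<in> filter_adjoin F a \<Longrightarrow> v \<in> filter_adjoin F a \<Longrightarrow>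
      inf u v \<in> filter_adjoin F a"
    using F by (intro filter_adjoin_inf_closed) (auto simp: proper_filter_def)
  ultimately show ?thesis
    using assms(2) filter_adjoin_upclosed unfolding proper_filter_def by blast
qed

lemma filter_adjoin_Int_filter_adjoin:
  fixes F :: "'a::{bounded_lattice, distrib_lattice} set"
  assumes F: "proper_filter F" and xy: "sup x y \<in> F"
  shows "filter_adjoin F x \<inter> filter_adjoin F y = F"
proof
  have up: "\<And>u v. u \<in> F \<Longrightarrow> u \<le> v \<Longrightarrow> v \<in> F"
    and inf: "\<And>u v. u \<in> F \<Longrightarrow> v \<in> F \<Longrightarrow> inf u v \<in> F"
    using F by (auto simp: proper_filter_def)
  show "filter_adjoin F x \<inter> filter_adjoin F y \<subseteq> F"
  proof
    fix z assume "z \<in> filter_adjoin F x \<inter> filter_adjoin F y"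
    then obtain p q where pq: "p \<in> F" "q \<in> F" "inf p x \<le> z" "inf q y \<le> z"
      unfolding filter_adjoin_def by auto
    have "inf (inf p q) (sup x y) = sup (inf (inf p q) x) (inf (inf p q) y)"
      by (simp add: inf_sup_distrib1)
    also have "\<dots> \<le> z"
    proof (rule le_supI)
      show "inf (inf p q) x \<le> z"
        by (rule order_trans[OF _ pq(3)]) (simp add: le_infI1 inf_mono)
      show "inf (inf p q) y \<le> z"
        by (rule order_trans[OF _ pq(4)]) (simp add: le_infI1 inf_mono)
    qed
    finally have le: "inf (inf p q) (sup x y) \<le> z" .
    have "inf (inf p q) (sup x y) \<in> F"
      using inf pq(1,2) xy by simp
    then show "z \<in> F"
      using le by (rule up)
  qed
  show "F \<subseteq> filter_adjoin F x \<inter> filter_adjoin F y"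
    using subset_filter_adjoin by blast
qed

lemma prime_theory_imp_prime_filter:
  fixes P :: "'a::{bounded_lattice, distrib_lattice} set"
  assumes P: "P \<in> prime_theories proper_filters"
  shows "prime_filter P"
  unfolding prime_filter_def
proof (intro conjI allI impI)
  show pf: "proper_filter P"
    using P by (simp add: prime_theories_def proper_filters_def)
  fix x y assume xy: "sup x y \<in> P"
  have prime: "\<And>\<T>. finite \<T> \<Longrightarrow> \<T> \<noteq> {} \<Longrightarrow> \<T> \<subseteq> proper_filters \<Longrightarrow> P = \<Inter>\<T> \<Longrightarrow> P \<in> \<T>"
    using P by (simp add: prime_theories_def)
  let ?Fx = "filter_adjoin P x" and ?Fy = "filter_adjoin P y"
  have top: "top \<in> P"
    using pf by (simp add: proper_filter_def)
  have Int: "?Fx \<inter> ?Fy = P"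
    using filter_adjoin_Int_filter_adjoin[OF pf xy] .
  have improper: "filter_adjoin P a = UNIV" if "bot \<in> filter_adjoin P a" for a
    using filter_adjoin_upclosed[OF that bot_least] by blast
  have "?Fx = P \<or> ?Fy = P"
  proof (cases "bot \<in> ?Fx \<or> bot \<in> ?Fy")
    case True
    then show ?thesis
      using Int improper by auto
  next
    case False
    then have "{?Fx, ?Fy} \<subseteq> proper_filters"
      using proper_filter_filter_adjoin[OF pf] by (simp add: proper_filters_def)
    with Int have "P \<in> {?Fx, ?Fy}"
      by (intro prime) auto
    then show ?thesis
      by blast
  qed
  then show "x \<in> P \<or> y \<in> P"
    using filter_adjoin_mem[OF top] by blast
qed

lemma prime_theories_proper_filters:
  "prime_theories (proper_filters :: 'a::{bounded_lattice, distrib_lattice} set set) =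
     {P. prime_filter P}"
  using prime_theory_imp_prime_filter prime_filter_in_prime_theories by blast

theorem lemma3p13:
  fixes f :: "'a::{bounded_lattice, distrib_lattice} \<Rightarrow> 'b::{bounded_lattice, distrib_lattice}"
  assumes "lattice_morphism f"
  shows "stable_logic_map (proper_filters :: 'a set set) (proper_filters :: 'b set set) f"
  using proper_filter_vimage[OF assms] prime_filter_vimage[OF assms]
  unfolding stable_logic_map_def prime_theories_proper_filters
  by (simp add: proper_filters_def)

end
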